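(* Let $G=(V,E)$ be a $k$-edge-connected graph, $F\subseteq E$, and let $S_1,\dots,S_\ell$ be a natural decomposition of $(V,F)$ into $k/4$-edge-connected components. Let $I\subseteq[\ell]$ be such that $S_I:=\bigcup_{i\in I}S_i$ satisfies $\emptyset\ne S_I\subsetneq V$. If $d_F(S_I)\ge \frac78 d(S_I)$ and $\phi(S_I)<1/8$, then $$\frac{\partial(S_I)}{\sum_{i\in I}\partial(S_i)}\ \ge\ 2\phi(S_I).$$
   Context: Graphs are finite, undirected, unweighted, loopless, possibly with parallel edges; $k$-edge-connected means every cut $(S,\overline S)$, $\emptyset\ne S\subsetneq V$, has at least $k$ edges. For $S\subseteq V$: $\partial(S)$ is the number of edges of $G$ with exactly one endpoint in $S$, $d(S)$ is the sum of $G$-degrees of vertices of $S$, $d_F(S)$ is the sum over $v\in S$ of the number of edges of $F$ incident to $v$, and $\phi(S)=\partial(S)/d(S)$. A natural decomposition of a graph $H=(V,F)$ into $r$-edge-connected components is obtained as follows: start with the partition $\{V\}$; while some part $P$ is such that the induced graph $H[P]$ is not $r$-edge-connected, choose a partition $(P_1,P_2)$ of $P$ into nonempty sets with fewer than $r$ edges of $H[P]$ between $P_1$ and $P_2$, and replace $P$ by $P_1,P_2$; the final parts are $S_1,\dots,S_\ell$. *)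

theory Defs
  imports Complex_Main
begin

text \<open>Parallel edges are distinct identifiers with the same endpoints.\<close>
definition multigraph :: "'a set \<Rightarrow> 'e set \<Rightarrow> ('e \<Rightarrow> 'a \<times> 'a) \<Rightarrow> bool" where
  "multigraph V E ends \<longleftrightarrow> finite V \<and> finite E \<and>
     (\<forall>e\<in>E. fst (ends e) \<in> V \<and> snd (ends e) \<in> V \<and> fst (ends e) \<noteq> snd (ends e))"

definition cut_edges :: "('e \<Rightarrow> 'a \<times> 'a) \<Rightarrow> 'e set \<Rightarrow> 'a set \<Rightarrow> 'e set" where
  "cut_edges ends X S = {e \<in> X. (fst (ends e) \<in> S) \<noteq> (snd (ends e) \<in> S)}"

definition bdry :: "'e set \<Rightarrow> ('e \<Rightarrow> 'a \<times> 'a) \<Rightarrow> 'a set \<Rightarrow> nat" where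
  "bdry E ends S = card (cut_edges ends E S)"

definition deg :: "'e set \<Rightarrow> ('e \<Rightarrow> 'a \<times> 'a) \<Rightarrow> 'a \<Rightarrow> nat" where
  "deg X ends v = card {e \<in> X. fst (ends e) = v \<or> snd (ends e) = v}"

definition degS :: "'e set \<Rightarrow> ('e \<Rightarrow> 'a \<times> 'a) \<Rightarrow> 'a set \<Rightarrow> nat" where
  "degS X ends S = (\<Sum>v\<in>S. deg X ends v)"

definition cond :: "'e set \<Rightarrow> ('e \<Rightarrow> 'a \<times> 'a) \<Rightarrow> 'a set \<Rightarrow> real" where
  "cond E ends S = real (bdry E ends S) / real (degS E ends S)"

definition induced_edges :: "('e \<Rightarrow> 'a \<times> 'a) \<Rightarrow> 'e set \<Rightarrow> 'a set \<Rightarrow> 'e set" where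
  "induced_edges ends X P = {e \<in> X. fst (ends e) \<in> P \<and> snd (ends e) \<in> P}"

definition edge_conn :: "real \<Rightarrow> 'a set \<Rightarrow> 'e set \<Rightarrow> ('e \<Rightarrow> 'a \<times> 'a) \<Rightarrow> bool" where
  "edge_conn r P X ends \<longleftrightarrow>
     (\<forall>Q. Q \<noteq> {} \<and> Q \<subset> P \<longrightarrow> real (card (cut_edges ends (induced_edges ends X P) Q)) \<ge> r)"

text \<open>Partitions reachable by the splitting process of the natural decomposition of
  H = (V,F) into r-edge-connected components.\<close>
inductive nd_reach :: "real \<Rightarrow> 'a set \<Rightarrow> 'e set \<Rightarrow> ('e \<Rightarrow> 'a \<times> 'a) \<Rightarrow> 'a set set \<Rightarrow> bool"
  for r V F ends where
  start: "nd_reach r V F ends {V}"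
| split: "\<lbrakk> nd_reach r V F ends Ps; P \<in> Ps; \<not> edge_conn r P F ends;
           P1 \<noteq> {}; P2 \<noteq> {}; P1 \<union> P2 = P; P1 \<inter> P2 = {};
           real (card (cut_edges ends (induced_edges ends F P) P1)) < r \<rbrakk>
         \<Longrightarrow> nd_reach r V F ends ((Ps - {P}) \<union> {P1, P2})"

definition natural_decomp :: "real \<Rightarrow> 'a set \<Rightarrow> 'e set \<Rightarrow> ('e \<Rightarrow> 'a \<times> 'a) \<Rightarrow> 'a set set \<Rightarrow> bool" where
  "natural_decomp r V F ends Ps \<longleftrightarrow> nd_reach r V F ends Ps \<and> (\<forall>P\<in>Ps. edge_conn r P F ends)"

end

theory Submission
  imports Defs "HOL-Library.Disjoint_Sets"
begin

(* Let S be the union of the parts in I and T the sum of their boundaries. An edge leaving S is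
   counted once in T and an edge inside S joining two different parts twice, so T = \<partial>(S) + 2Y.
   Edges of E - F inside S number at most (d(S) - d_F(S))/2 <= d(S)/16. Edges of F inside S joining
   different parts are created only by splits whose two halves both meet S; each such split cuts fewer
   than k/4 edges of F and raises the number of parts meeting S by one, so there are at most
   (k/4)(|I| - 1) of them. Hence T <= \<partial>(S) + k|I|/2 + d(S)/8, and since every part of I is a
   proper cut, T >= k|I|. Therefore T <= 2 \<partial>(S) + d(S)/4 < d(S)/2, i.e. \<partial>(S)/T >= 2 \<phi>(S). *)

lemma card_filter_eq_sum_of_bool:
  "finite A \<Longrightarrow> card {x\<in>A. Q x} = (\<Sum>x\<in>A. of_bool (Q x))"
  by (simp add: Collect_conj_eq)

lemma nd_reach_partition_on:
  assumes "nd_reach r V F ends Ps" "V \<noteq> {}"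
  shows "partition_on V Ps"
  using assms(1)
proof induction
  case start
  show ?case using assms(2) by (rule partition_on_space)
next
  case (split Ps P P1 P2)
  have kept: "pairwise disjnt (Ps - {P})"
    using partition_onD2[OF split.IH] by (rule pairwise_subset) blast
  have "disjnt Q P" if "Q \<in> Ps - {P}" for Q
    using partition_onD2[OF split.IH] split.hyps(2) that by (auto dest: pairwiseD)
  then have kept_halves: "disjnt Q P1" "disjnt Q P2" if "Q \<in> Ps - {P}" for Q
    using split.hyps(6) that by (auto simp: disjnt_def)
  show ?case
  proof (rule partition_onI)
    show "\<Union> ((Ps - {P}) \<union> {P1, P2}) = V"
      using split partition_onD1[OF split.IH] by blast
    show "{} \<notin> (Ps - {P}) \<union> {P1, P2}"
      using split partition_onD3[OF split.IH] by blast
    fix p q assume "p \<in> (Ps - {P}) \<union> {P1, P2}" "q \<in> (Ps - {P}) \<union> {P1, P2}" "p \<noteq> q"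
    then consider "p \<in> Ps - {P}" "q \<in> Ps - {P}" | "p \<in> Ps - {P}" "q \<in> {P1, P2}"
      | "p \<in> {P1, P2}" "q \<in> Ps - {P}" | "{p, q} = {P1, P2}"
      by blast
    then show "disjnt p q"
    proof cases
      case 1
      then show ?thesis using pairwiseD[OF kept] \<open>p \<noteq> q\<close> by blast
    next
      case 2
      then show ?thesis using kept_halves by blast
    next
      case 3
      then show ?thesis using kept_halves disjnt_sym by blast
    next
      case 4
      then show ?thesis using split.hyps(7) \<open>p \<noteq> q\<close>
        by (auto simp: doubleton_eq_iff disjnt_def)
    qed
  qed
qed

lemma card_parts_meeting_split:
  assumes "finite Ps" "P \<in> Ps" "P1 \<notin> Ps" "P2 \<notin> Ps" "P1 \<union> P2 = P" "P1 \<inter> P2 = {}" "P1 \<noteq> {}"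
  shows "card {Q\<in>(Ps - {P}) \<union> {P1, P2}. Q \<inter> A \<noteq> {}}
    = card {Q\<in>Ps. Q \<inter> A \<noteq> {}} + of_bool (P1 \<inter> A \<noteq> {} \<and> P2 \<inter> A \<noteq> {})"
proof -
  let ?N = "{Q\<in>Ps. Q \<inter> A \<noteq> {}}" and ?M = "{Q\<in>{P1, P2}. Q \<inter> A \<noteq> {}}"
  have "{Q\<in>(Ps - {P}) \<union> {P1, P2}. Q \<inter> A \<noteq> {}} = (?N - {P}) \<union> ?M" by blast
  moreover have "(?N - {P}) \<inter> ?M = {}" using assms(3,4) by blast
  moreover have "card ?M = of_bool (P1 \<inter> A \<noteq> {}) + of_bool (P2 \<inter> A \<noteq> {})"
  proof -
    have "P1 \<noteq> P2" using assms(6,7) by blast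
    moreover have "?M = (if P1 \<inter> A \<noteq> {} then {P1} else {}) \<union> (if P2 \<inter> A \<noteq> {} then {P2} else {})"
      by auto
    ultimately show ?thesis by simp
  qed
  moreover have "card (?N - {P}) + of_bool (P1 \<inter> A \<noteq> {} \<or> P2 \<inter> A \<noteq> {}) = card ?N"
  proof (cases "P \<in> ?N")
    case True
    then have "card ?N > 0" using assms(1) card_gt_0_iff by fastforce
    moreover have "P1 \<inter> A \<noteq> {} \<or> P2 \<inter> A \<noteq> {}" using True assms(5) by blast
    ultimately show ?thesis using True assms(1) by (simp add: card_Diff_singleton)
  next
    case False
    then show ?thesis using assms(2,5) by auto
  qed
  moreover have "of_bool (P1 \<inter> A \<noteq> {} \<or> P2 \<inter> A \<noteq> {}) + of_bool (P1 \<inter> A \<noteq> {} \<and> P2 \<inter> A \<noteq> {})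
      = (of_bool (P1 \<inter> A \<noteq> {}) + of_bool (P2 \<inter> A \<noteq> {}) :: nat)"
    by (cases "P1 \<inter> A = {}"; cases "P2 \<inter> A = {}") simp_all
  ultimately show ?thesis using assms(1) card_Un_disjoint[of "?N - {P}" ?M] by simp
qed

definition cross_edges :: "('e \<Rightarrow> 'a \<times> 'a) \<Rightarrow> 'e set \<Rightarrow> 'a set set \<Rightarrow> 'a set \<Rightarrow> 'e set" where
  "cross_edges ends X Ps A =
     {e \<in> induced_edges ends X A. \<forall>Q\<in>Ps. fst (ends e) \<in> Q \<longrightarrow> snd (ends e) \<notin> Q}"

lemma card_cross_edges_le:
  assumes "nd_reach r V F ends Ps" "finite V" "finite F" "A \<subseteq> V" "A \<noteq> {}"
  shows "real (card (cross_edges ends F Ps A)) \<le> r * (real (card {Q\<in>Ps. Q \<inter> A \<noteq> {}}) - 1)"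
  using assms(1)
proof induction
  case start
  have "cross_edges ends F {V} A = {}"
    using assms(4) by (auto simp: cross_edges_def induced_edges_def)
  moreover have "{Q\<in>{V}. Q \<inter> A \<noteq> {}} = {V}" using assms(4,5) by auto
  ultimately show ?case by simp
next
  case (split Ps P P1 P2)
  let ?Ps' = "(Ps - {P}) \<union> {P1, P2}"
  let ?both = "P1 \<inter> A \<noteq> {} \<and> P2 \<inter> A \<noteq> {}"
  define D where "D = cut_edges ends (induced_edges ends F P) P1 \<inter> induced_edges ends F A"
  have part: "partition_on V Ps" using split.hyps(1) assms(4,5) by (auto intro: nd_reach_partition_on)
  have "Q \<notin> Ps" if "Q \<subseteq> P" "Q \<noteq> {}" "Q \<noteq> P" for Q
    using pairwiseD[OF partition_onD2[OF part] _ split.hyps(2)] that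
    by (metis Int_absorb2 disjnt_def)
  then have "P1 \<notin> Ps" "P2 \<notin> Ps" using split.hyps(4-7) by auto
  then have parts: "real (card {Q\<in>?Ps'. Q \<inter> A \<noteq> {}}) = real (card {Q\<in>Ps. Q \<inter> A \<noteq> {}}) + of_bool ?both"
    using card_parts_meeting_split[OF finite_elements[OF assms(2) part] split.hyps(2)] split.hyps(4,6,7)
    by simp
  have fin: "finite (cross_edges ends F Ps A)" "finite D"
    using assms(3) by (simp_all add: cross_edges_def induced_edges_def D_def)
  have "cross_edges ends F ?Ps' A \<subseteq> cross_edges ends F Ps A \<union> D"
    using split.hyps(2,6) by (auto simp: cross_edges_def D_def cut_edges_def induced_edges_def)
  then have cross: "card (cross_edges ends F ?Ps' A) \<le> card (cross_edges ends F Ps A) + card D"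
    by (intro order_trans[OF card_mono card_Un_le]) (use fin in auto)
  have "card D \<le> card (cut_edges ends (induced_edges ends F P) P1)"
    using assms(3) by (intro card_mono) (auto simp: D_def cut_edges_def induced_edges_def)
  moreover have "D = {}" if "\<not> ?both"
    using that split.hyps(6) by (auto simp: D_def cut_edges_def induced_edges_def)
  ultimately have "real (card D) \<le> r * of_bool ?both"
    using split.hyps(8) by (cases ?both) auto
  then show ?case using split.IH parts cross by (simp add: algebra_simps)
qed

lemma card_parts_separating:
  assumes "disjoint I"
  shows "card {P\<in>I. u \<in> P \<and> v \<notin> P} = of_bool (u \<in> \<Union>I \<and> (\<forall>P\<in>I. u \<in> P \<longrightarrow> v \<notin> P))"
proof (cases "u \<in> \<Union>I")
  case True
  then obtain P0 where P0: "P0 \<in> I" "u \<in> P0" by blast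
  have unique: "P = P0" if "P \<in> I" "u \<in> P" for P
    using that P0 disjointD[OF assms] by (metis IntI empty_iff)
  then have "(\<forall>P\<in>I. u \<in> P \<longrightarrow> v \<notin> P) \<longleftrightarrow> v \<notin> P0" using P0 by blast
  moreover have "{P\<in>I. u \<in> P \<and> v \<notin> P} = {P0} \<inter> {P. v \<notin> P}"
    using P0 unique by blast
  ultimately show ?thesis using True by simp
next
  case False
  then have empty: "{P\<in>I. u \<in> P \<and> v \<notin> P} = {}" by blast
  show ?thesis unfolding empty using False by simp
qed

lemma card_parts_cutting_edge:
  assumes "disjoint I" "finite I"
  shows "card {P\<in>I. (u \<in> P) \<noteq> (v \<in> P)} = of_bool ((u \<in> \<Union>I) \<noteq> (v \<in> \<Union>I))
    + 2 * of_bool (u \<in> \<Union>I \<and> v \<in> \<Union>I \<and> (\<forall>P\<in>I. u \<in> P \<longrightarrow> v \<notin> P))"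
    (is "_ = of_bool (?a \<noteq> ?b) + 2 * of_bool (?a \<and> ?b \<and> ?c)")
proof -
  have split: "{P\<in>I. (u \<in> P) \<noteq> (v \<in> P)} = {P\<in>I. u \<in> P \<and> v \<notin> P} \<union> {P\<in>I. v \<in> P \<and> u \<notin> P}"
    by blast
  have "card {P\<in>I. (u \<in> P) \<noteq> (v \<in> P)}
      = card {P\<in>I. u \<in> P \<and> v \<notin> P} + card {P\<in>I. v \<in> P \<and> u \<notin> P}"
    unfolding split using assms(2) by (intro card_Un_disjoint) auto
  also have "\<dots> = of_bool (?a \<and> ?c) + of_bool (?b \<and> ?c)"
  proof -
    have "(\<forall>P\<in>I. v \<in> P \<longrightarrow> u \<notin> P) \<longleftrightarrow> ?c" by blast
    then show ?thesis unfolding card_parts_separating[OF assms(1)] by simp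
  qed
  also have "\<dots> = of_bool (?a \<noteq> ?b) + 2 * of_bool (?a \<and> ?b \<and> ?c)"
  proof -
    have count: "\<And>a b c. (a \<noteq> b \<Longrightarrow> c) \<Longrightarrow>
        of_bool (a \<and> c) + of_bool (b \<and> c) = of_bool (a \<noteq> b) + 2 * (of_bool (a \<and> b \<and> c) :: nat)"
      by auto
    show ?thesis by (rule count) blast
  qed
  finally show ?thesis .
qed

lemma sum_bdry_disjoint:
  assumes "finite E" "finite I" "disjoint I"
  shows "(\<Sum>P\<in>I. bdry E ends P) = bdry E ends (\<Union>I) + 2 * card (cross_edges ends E I (\<Union>I))"
proof -
  have "(\<Sum>P\<in>I. bdry E ends P)
      = (\<Sum>P\<in>I. \<Sum>e\<in>E. of_bool ((fst (ends e) \<in> P) \<noteq> (snd (ends e) \<in> P)))"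
    unfolding bdry_def cut_edges_def using assms(1) by (simp only: card_filter_eq_sum_of_bool)
  also have "\<dots> = (\<Sum>e\<in>E. card {P\<in>I. (fst (ends e) \<in> P) \<noteq> (snd (ends e) \<in> P)})"
    using assms(2) by (subst sum.swap) (simp only: card_filter_eq_sum_of_bool)
  also have "\<dots> = (\<Sum>e\<in>E. of_bool ((fst (ends e) \<in> \<Union>I) \<noteq> (snd (ends e) \<in> \<Union>I))
      + 2 * of_bool (e \<in> cross_edges ends E I (\<Union>I)))"
    by (intro sum.cong refl, subst card_parts_cutting_edge[OF assms(3,2)])
      (simp add: cross_edges_def induced_edges_def)
  also have "\<dots> = bdry E ends (\<Union>I) + 2 * card (cross_edges ends E I (\<Union>I))"
    using assms(1) by (simp add: sum.distrib sum_distrib_left bdry_def cut_edges_def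
        cross_edges_def induced_edges_def Collect_conj_eq)
  finally show ?thesis .
qed

lemma bdry_Union_le_sum_bdry:
  "finite E \<Longrightarrow> finite I \<Longrightarrow> disjoint I \<Longrightarrow> bdry E ends (\<Union>I) \<le> (\<Sum>P\<in>I. bdry E ends P)"
  by (simp add: sum_bdry_disjoint)

lemma degS_diff:
  assumes "Y \<subseteq> X" "finite X"
  shows "degS X ends S = degS Y ends S + degS (X - Y) ends S"
proof -
  have "deg X ends v = deg Y ends v + deg (X - Y) ends v" for v
  proof -
    have split: "{e\<in>X. fst (ends e) = v \<or> snd (ends e) = v}
        = {e\<in>Y. fst (ends e) = v \<or> snd (ends e) = v} \<union> {e\<in>X - Y. fst (ends e) = v \<or> snd (ends e) = v}"
      using assms(1) by blast
    show ?thesis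
      unfolding deg_def split using assms by (intro card_Un_disjoint) (auto intro: rev_finite_subset)
  qed
  then show ?thesis unfolding degS_def by (simp add: sum.distrib)
qed

lemma twice_card_induced_edges_le_degS:
  assumes "finite X" "finite S" "\<forall>e\<in>X. fst (ends e) \<noteq> snd (ends e)"
  shows "2 * card (induced_edges ends X S) \<le> degS X ends S"
proof -
  have "degS X ends S = (\<Sum>e\<in>X. card {v\<in>S. fst (ends e) = v \<or> snd (ends e) = v})"
    unfolding degS_def deg_def using assms(1,2)
    by (simp only: card_filter_eq_sum_of_bool) (rule sum.swap)
  also have "\<dots> \<ge> (\<Sum>e\<in>induced_edges ends X S. card {v\<in>S. fst (ends e) = v \<or> snd (ends e) = v})"
    using assms(1) by (intro sum_mono2) (auto simp: induced_edges_def)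
  also have "(\<Sum>e\<in>induced_edges ends X S. card {v\<in>S. fst (ends e) = v \<or> snd (ends e) = v})
      = (\<Sum>e\<in>induced_edges ends X S. 2)"
  proof (rule sum.cong[OF refl])
    fix e assume e: "e \<in> induced_edges ends X S"
    then have "{v\<in>S. fst (ends e) = v \<or> snd (ends e) = v} = {fst (ends e), snd (ends e)}"
      by (auto simp: induced_edges_def)
    then show "card {v\<in>S. fst (ends e) = v \<or> snd (ends e) = v} = 2"
      using e assms(3) by (simp add: induced_edges_def)
  qed
  finally show ?thesis by (simp add: mult.commute)
qed

lemma card_cross_edges_le_degS:
  assumes "finite E" "F \<subseteq> E" "finite S" "\<forall>e\<in>E. fst (ends e) \<noteq> snd (ends e)"
  shows "2 * card (cross_edges ends E Ps S) + degS F ends S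
    \<le> 2 * card (cross_edges ends F Ps S) + degS E ends S"
proof -
  have "cross_edges ends E Ps S \<subseteq> cross_edges ends F Ps S \<union> induced_edges ends (E - F) S"
    by (auto simp: cross_edges_def induced_edges_def)
  then have "card (cross_edges ends E Ps S)
      \<le> card (cross_edges ends F Ps S) + card (induced_edges ends (E - F) S)"
    using assms(1,2) by (intro order_trans[OF card_mono card_Un_le])
      (auto simp: cross_edges_def induced_edges_def finite_subset)
  moreover have "2 * card (induced_edges ends (E - F) S) \<le> degS (E - F) ends S"
    using assms by (intro twice_card_induced_edges_le_degS) auto
  ultimately show ?thesis using degS_diff[OF assms(2,1), of ends S] by linarith
qed

lemma cross_edges_Union_parts:
  assumes "I \<subseteq> Ps" "disjoint Ps"
  shows "cross_edges ends X Ps (\<Union>I) = cross_edges ends X I (\<Union>I)"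
proof
  show "cross_edges ends X Ps (\<Union>I) \<subseteq> cross_edges ends X I (\<Union>I)"
    using assms(1) by (auto simp: cross_edges_def)
  show "cross_edges ends X I (\<Union>I) \<subseteq> cross_edges ends X Ps (\<Union>I)"
  proof
    fix e assume e: "e \<in> cross_edges ends X I (\<Union>I)"
    then obtain P where P: "P \<in> I" "fst (ends e) \<in> P" by (auto simp: cross_edges_def induced_edges_def)
    have "Q = P" if "Q \<in> Ps" "fst (ends e) \<in> Q" for Q
      using that P assms disjointD by blast
    then show "e \<in> cross_edges ends X Ps (\<Union>I)" using e P by (auto simp: cross_edges_def)
  qed
qed

lemma bdry_ge_of_edge_conn:
  assumes "multigraph V E ends" "edge_conn r V E ends" "P \<noteq> {}" "P \<subset> V"
  shows "r \<le> real (bdry E ends P)"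
proof -
  have "induced_edges ends E V = E"
    using assms(1) by (auto simp: multigraph_def induced_edges_def)
  then show ?thesis using assms(2-4) by (simp add: edge_conn_def bdry_def)
qed

lemma sum_bdry_parts_le:
  assumes G: "multigraph V E ends" and FE: "F \<subseteq> E" and reach: "nd_reach r V F ends Ps"
    and r: "r \<ge> 0" and IPs: "I \<subseteq> Ps" and IV: "\<Union>I \<subseteq> V" and ne: "\<Union>I \<noteq> {}"
  shows "real (\<Sum>P\<in>I. bdry E ends P) + real (degS F ends (\<Union>I))
    \<le> real (bdry E ends (\<Union>I)) + 2 * r * (real (card I) - 1) + real (degS E ends (\<Union>I))"
proof -
  have finV: "finite V" and finE: "finite E" and loopless: "\<forall>e\<in>E. fst (ends e) \<noteq> snd (ends e)"
    using G by (auto simp: multigraph_def)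
  have part: "partition_on V Ps" using reach IV ne by (auto intro: nd_reach_partition_on)
  have finI: "finite I" using finite_elements[OF finV part] IPs finite_subset by blast
  have disjI: "disjoint I" using partition_onD2[OF part] IPs pairwise_subset by blast
  have "{Q\<in>Ps. Q \<inter> \<Union>I \<noteq> {}} \<subseteq> I"
    using IPs partition_onD2[OF part] by (auto dest: disjointD)
  then have "card {Q\<in>Ps. Q \<inter> \<Union>I \<noteq> {}} \<le> card I" using finI by (rule card_mono[rotated])
  then have "real (card (cross_edges ends F I (\<Union>I))) \<le> r * (real (card I) - 1)"
    using card_cross_edges_le[OF reach finV finite_subset[OF FE finE] IV ne]
      cross_edges_Union_parts[OF IPs partition_onD2[OF part]]
    by (smt (verit) r mult_left_mono of_nat_le_iff)
  moreover have "2 * card (cross_edges ends E I (\<Union>I)) + degS F ends (\<Union>I)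
      \<le> 2 * card (cross_edges ends F I (\<Union>I)) + degS E ends (\<Union>I)"
    using finE FE finite_subset[OF IV finV] loopless by (rule card_cross_edges_le_degS)
  ultimately show ?thesis
    unfolding sum_bdry_disjoint[OF finE finI disjI] by linarith
qed

lemma sum_bdry_ge_of_edge_conn:
  assumes "multigraph V E ends" "edge_conn r V E ends" "{} \<notin> I" "\<Union>I \<subset> V"
  shows "r * real (card I) \<le> real (\<Sum>P\<in>I. bdry E ends P)"
proof -
  have "r \<le> real (bdry E ends P)" if "P \<in> I" for P
  proof (rule bdry_ge_of_edge_conn[OF assms(1,2)])
    show "P \<noteq> {}" using that assms(3) by blast
    show "P \<subset> V" using that assms(4) by (meson Union_upper subset_psubset_trans)
  qed
  then have "(\<Sum>P\<in>I. r) \<le> (\<Sum>P\<in>I. real (bdry E ends P))" by (rule sum_mono)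
  then show ?thesis by (simp add: mult.commute)
qed

lemma ratio_ge_twice_conductance_arith:
  fixes B T D DF k N :: real
  assumes "0 \<le> B" "B \<le> T" "0 \<le> k" "k * N \<le> T"
    and "T + DF \<le> B + 2 * (k / 4) * (N - 1) + D" "7 / 8 * D \<le> DF" "B / D < 1 / 8"
  shows "2 * (B / D) \<le> B / T"
proof (cases "B = 0 \<or> D \<le> 0")
  case True
  then have "B / D \<le> 0" using assms(1) by (auto simp: divide_nonneg_nonpos)
  moreover have "0 \<le> B / T" using assms(1,2) by simp
  ultimately show ?thesis by linarith
next
  case False
  then have "B < D / 8" using assms(7) by (simp add: divide_less_eq)
  moreover have "2 * (k / 4) * (N - 1) = k * N / 2 - k / 2" by (simp add: field_simps)
  ultimately have "T \<le> D / 2" using assms(3-6) by linarith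
  then show ?thesis using False assms(1,2) divide_left_mono[of T "D / 2" B] by (simp add: mult.commute)
qed

theorem mainTheorem12:
  fixes V :: "'a set" and E F :: "'e set" and ends :: "'e \<Rightarrow> 'a \<times> 'a"
    and k :: nat and Ps I :: "'a set set"
  assumes G: "multigraph V E ends"
    and kconn: "edge_conn (real k) V E ends"
    and FE: "F \<subseteq> E"
    and dec: "natural_decomp (real k / 4) V F ends Ps"
    and IPs: "I \<subseteq> Ps"
    and ne: "\<Union>I \<noteq> {}" and proper: "\<Union>I \<subset> V"
    and dF: "real (degS F ends (\<Union>I)) \<ge> 7 / 8 * real (degS E ends (\<Union>I))"
    and phi: "cond E ends (\<Union>I) < 1 / 8"
  shows "real (bdry E ends (\<Union>I)) / real (\<Sum>S\<in>I. bdry E ends S) \<ge> 2 * cond E ends (\<Union>I)"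
proof -
  have reach: "nd_reach (real k / 4) V F ends Ps" using dec by (simp add: natural_decomp_def)
  have part: "partition_on V Ps" using reach proper by (auto intro: nd_reach_partition_on)
  have finV: "finite V" and finE: "finite E" using G by (auto simp: multigraph_def)
  have finI: "finite I" using IPs finite_elements[OF finV part] finite_subset by blast
  have disjI: "disjoint I" using partition_onD2[OF part] IPs pairwise_subset by blast
  show ?thesis
    unfolding cond_def
  proof (rule ratio_ge_twice_conductance_arith[where k = "real k" and N = "real (card I)"
        and DF = "real (degS F ends (\<Union>I))"])
    show "real (bdry E ends (\<Union>I)) \<le> real (\<Sum>S\<in>I. bdry E ends S)"
      unfolding of_nat_le_iff by (rule bdry_Union_le_sum_bdry[OF finE finI disjI])
    show "real k * real (card I) \<le> real (\<Sum>S\<in>I. bdry E ends S)"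
      using sum_bdry_ge_of_edge_conn[OF G kconn _ proper] IPs partition_onD3[OF part] by blast
    show "real (\<Sum>S\<in>I. bdry E ends S) + real (degS F ends (\<Union>I))
        \<le> real (bdry E ends (\<Union>I)) + 2 * (real k / 4) * (real (card I) - 1) + real (degS E ends (\<Union>I))"
      by (rule sum_bdry_parts_le[OF G FE reach _ IPs _ ne]) (use proper in auto)
  qed (use dF phi in \<open>simp_all add: cond_def\<close>)
qed

end
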